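(* Let $\Lambda\subset Y$ satisfy condition (★), let $J$ be generic as in the context, and let $e\ge2$ be an integer with $|a|\ge e$ for every Reeb chord $a$ of $\Lambda$. Then for every integer $p$ with $1\le p\le 3e-1$, $$\dim_{\mathbb{Z}/2}\mathrm{LCH}_p(\Lambda)=\dim\ker\big((\delta_J)_*:HL_p(\Lambda)\to HL^2_{p-1}(\Lambda)\big)+\dim\operatorname{coker}\big((\delta_J)_*:HL_{p+1}(\Lambda)\to HL^2_p(\Lambda)\big).$$
   Context: Let $(Y,\alpha)$ be a $(2n-1)$-dimensional contact manifold with a diffeomorphism $Y\cong\mathbb{R}\times P$ pulling back $dz+\lambda_P$ to $\alpha$, where $(P,\lambda_P)$ is the completion of a compact Liouville domain with $2c_1(TP)=0$ and $H_1(P;\mathbb{Z})=0$. Let $\Lambda\subset Y$ be a compact connected Legendrian submanifold with vanishing Maslov class, all Reeb chords non-degenerate, each Reeb chord $a$ graded by $|a|=\mu(a)-1$ ($\mu$ the Conley–Zehnder index defined via capping paths in $\Lambda$). For a generic almost complex structure $J$ on $\mathbb{R}\times Y$ that is compatible with $d(e^r\alpha)$, $\mathbb{R}$-invariant, preserves $\xi=\ker\alpha$, sends $\partial_r$ to the Reeb vector field, and equals a fixed such structure outside a compact set, $\mathcal{M}_J(a;b_1,\dots,b_m)$ denotes the moduli space, modulo $\mathbb{R}$-translation and conformal reparametrization, of $J$-holomorphic disks with boundary punctures $p_0,\dots,p_m$ (clockwise) and boundary on $\mathbb{R}\times\Lambda$, positively asymptotic at $p_0$ to the strip over $a$ and negatively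 asymptotic at $p_k$ to the strip over $b_k$; for $(b_1,\dots,b_m)\ne(a)$ it is a manifold of dimension $|a|-1-\sum_k|b_k|$, compact when $0$-dimensional. The Chekanov–Eliashberg DGA $(\mathcal{A}_*(\Lambda),\partial_J)$ is the unital free noncommutative graded $\mathbb{Z}/2$-algebra on the Reeb chords with $\partial_J a=\sum_{m\ge0}\sum_{|b_1|+\dots+|b_m|=|a|-1}\#_{\mathbb{Z}/2}\mathcal{M}_J(a;b_1,\dots,b_m)\,b_1\cdots b_m$, extended by the Leibniz rule; $\partial_J^2=0$; $\mathrm{LCH}_*(\Lambda)$ is its homology. Condition (★): $|a|\ge2$ for every Reeb chord $a$ of $\Lambda$ that is homotopic, through paths with endpoints in $\Lambda$, to a constant path in $\Lambda$. Under (★): $CL_*(\Lambda)$ is the graded $\mathbb{Z}/2$-vector space spanned by the Reeb chords ($a$ in degree $|a|$), $d_Ja=\sum_{|b|=|a|-1}\#_{\mathbb{Z}/2}\mathcal{M}_J(a;b)\,b$, and $\delta_Ja=\sum_{|b_1|+|b_2|=|a|-1}\#_{\mathbb{Z}/2}\mathcal{M}_J(a;b_1,b_2)\,b_1\otimes b_2$; then $d_J^2=0$ and $\delta_J:CL_{*+1}(\Lambda)\to(CL(\Lambda)^{\otimes2})_*$ is a chain map, where $CL^{\otimes2}$ carries $d_J\otimes\mathrm{id}+\mathrm{id}\otimes d_J$. $HL_*(\Lambda)$ is the homology of $(CL_*(\Lambda),d_J)$, $HL^2_*(\Lambda)$ that of $CL^{\otimes2}$, and $(\delta_J)_*:HL_{*+1}(\Lambda)\to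 HL^2_*(\Lambda)$ the induced map. *)

theory Defs
  imports Complex_Main "HOL-Library.Z2" "HOL-Library.Function_Algebras"
begin

text \<open>Z/2-vector spaces are modelled as spaces of functions into the field bit = Z/2,
  with pointwise operations.\<close>

definition fscale :: "bit \<Rightarrow> ('x \<Rightarrow> bit) \<Rightarrow> ('x \<Rightarrow> bit)" where
  "fscale c f = (\<lambda>x. c * f x)"

definition zdim :: "('x \<Rightarrow> bit) set \<Rightarrow> nat" where
  "zdim S = vector_space.dim fscale S"

text \<open>Dimension of the subquotient A/B (used with B a subspace of the subspace A).\<close>
definition quot_dim :: "('x \<Rightarrow> bit) set \<Rightarrow> ('x \<Rightarrow> bit) set \<Rightarrow> nat" where
  "quot_dim A B = zdim A - zdim B"

definition supp :: "('x \<Rightarrow> bit) \<Rightarrow> 'x set" where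
  "supp f = {x. f x \<noteq> 0}"

definition wdeg :: "('c \<Rightarrow> int) \<Rightarrow> 'c list \<Rightarrow> int" where
  "wdeg deg w = sum_list (map deg w)"

text \<open>Degree-p part of the free noncommutative unital Z/2-algebra on the chords C:
  finite Z/2-combinations of words in C of total degree p.\<close>
definition CE_alg :: "'c set \<Rightarrow> ('c \<Rightarrow> int) \<Rightarrow> int \<Rightarrow> ('c list \<Rightarrow> bit) set" where
  "CE_alg C deg p = {x. finite (supp x) \<and> (\<forall>w\<in>supp x. set w \<subseteq> C \<and> wdeg deg w = p)}"

text \<open>n a bs is the mod 2 count of the moduli space M(a; b1,...,bm).
  Differential of a word, via the Leibniz rule (no signs over Z/2):
  the sum over i of  w_1...w_(i-1) (d w_i) w_(i+1)...w_k.\<close>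
definition CE_word :: "('c \<Rightarrow> 'c list \<Rightarrow> bit) \<Rightarrow> 'c list \<Rightarrow> ('c list \<Rightarrow> bit)" where
  "CE_word n w = (\<lambda>v. \<Sum>i<length w. \<Sum>u\<in>{u. take i w @ u @ drop (Suc i) w = v}. n (w ! i) u)"

definition CE_diff :: "('c \<Rightarrow> 'c list \<Rightarrow> bit) \<Rightarrow> ('c list \<Rightarrow> bit) \<Rightarrow> ('c list \<Rightarrow> bit)" where
  "CE_diff n x = (\<lambda>v. \<Sum>w\<in>supp x. x w * CE_word n w v)"

definition LCH_dim :: "'c set \<Rightarrow> ('c \<Rightarrow> int) \<Rightarrow> ('c \<Rightarrow> 'c list \<Rightarrow> bit) \<Rightarrow> int \<Rightarrow> nat" where
  "LCH_dim C deg n p =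
     quot_dim {x \<in> CE_alg C deg p. CE_diff n x = 0} (CE_diff n ` CE_alg C deg (p + 1))"

definition CL :: "'c set \<Rightarrow> ('c \<Rightarrow> int) \<Rightarrow> int \<Rightarrow> ('c \<Rightarrow> bit) set" where
  "CL C deg p = {x. \<forall>a. x a \<noteq> 0 \<longrightarrow> a \<in> C \<and> deg a = p}"

definition CL2 :: "'c set \<Rightarrow> ('c \<Rightarrow> int) \<Rightarrow> int \<Rightarrow> ('c \<times> 'c \<Rightarrow> bit) set" where
  "CL2 C deg p = {y. \<forall>b1 b2. y (b1, b2) \<noteq> 0 \<longrightarrow> b1 \<in> C \<and> b2 \<in> C \<and> deg b1 + deg b2 = p}"

definition dL :: "'c set \<Rightarrow> ('c \<Rightarrow> 'c list \<Rightarrow> bit) \<Rightarrow> ('c \<Rightarrow> bit) \<Rightarrow> ('c \<Rightarrow> bit)" where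
  "dL C n x = (\<lambda>b. \<Sum>a\<in>C. x a * n a [b])"

definition deltaL :: "'c set \<Rightarrow> ('c \<Rightarrow> 'c list \<Rightarrow> bit) \<Rightarrow> ('c \<Rightarrow> bit) \<Rightarrow> ('c \<times> 'c \<Rightarrow> bit)" where
  "deltaL C n x = (\<lambda>(b1, b2). \<Sum>a\<in>C. x a * n a [b1, b2])"

text \<open>d (x) id + id (x) d on CL (x) CL.\<close>
definition dL2 :: "'c set \<Rightarrow> ('c \<Rightarrow> 'c list \<Rightarrow> bit) \<Rightarrow> ('c \<times> 'c \<Rightarrow> bit) \<Rightarrow> ('c \<times> 'c \<Rightarrow> bit)" where
  "dL2 C n y = (\<lambda>(b1, b2). \<Sum>c\<in>C. y (c, b2) * n c [b1] + y (b1, c) * n c [b2])"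

definition ZL where "ZL C deg n p = {x \<in> CL C deg p. dL C n x = 0}"
definition BL where "BL C deg n p = dL C n ` CL C deg (p + 1)"
definition ZL2 where "ZL2 C deg n p = {y \<in> CL2 C deg p. dL2 C n y = 0}"
definition BL2 where "BL2 C deg n p = dL2 C n ` CL2 C deg (p + 1)"

text \<open>dim ker ((delta)_* : HL_p -> HL^2_(p-1)):
  ker = {[z] : z cycle of degree p, delta z a boundary} inside HL_p.\<close>
definition ker_delta_dim :: "'c set \<Rightarrow> ('c \<Rightarrow> int) \<Rightarrow> ('c \<Rightarrow> 'c list \<Rightarrow> bit) \<Rightarrow> int \<Rightarrow> nat" where
  "ker_delta_dim C deg n p =
     quot_dim {z \<in> ZL C deg n p. deltaL C n z \<in> BL2 C deg n (p - 1)} (BL C deg n p)"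

text \<open>dim coker ((delta)_* : HL_(p+1) -> HL^2_p) = dim Z^2_p / (B^2_p + delta(Z_(p+1))).\<close>
definition coker_delta_dim :: "'c set \<Rightarrow> ('c \<Rightarrow> int) \<Rightarrow> ('c \<Rightarrow> 'c list \<Rightarrow> bit) \<Rightarrow> int \<Rightarrow> nat" where
  "coker_delta_dim C deg n p =
     quot_dim (ZL2 C deg n p)
       {u + v | u v. u \<in> BL2 C deg n p \<and> v \<in> deltaL C n ` ZL C deg n (p + 1)}"

end

theory Submission
  imports Defs
begin

text \<open>In degrees \<open>1 \<le> p < 3e\<close> every word of chords of degree \<open>p\<close> has length one or two, so
  \<open>\<A>\<^sub>p = CL\<^sub>p \<oplus> (CL \<otimes> CL)\<^sub>p\<close> via the linear and quadratic parts of an element. The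
  differential never shortens words, hence it is lower triangular with respect to this
  splitting, with diagonal entries \<open>d\<close> and \<open>d \<otimes> 1 + 1 \<otimes> d\<close> and off-diagonal entry \<open>\<delta>\<close>.
  Projecting the cycles and boundaries of \<open>\<A>\<^sub>p\<close> to their linear parts, the images are the
  cycles representing \<open>ker \<delta>\<^sub>*\<close> and the linear boundaries, while the kernels are carried
  injectively by the quadratic part onto \<open>Z\<^sup>2\<^sub>p\<close> and onto \<open>B\<^sup>2\<^sub>p + \<delta>(Z\<^sub>p\<^sub>+\<^sub>1)\<close>.
  Dimensions are additive along these projections, which is counted via the cardinality
  \<open>2\<^sup>d\<close> of a \<open>d\<close>-dimensional \<open>\<int>/2\<close>-space.\<close>

(* Keep bit arithmetic abstract: unfolding to xor/and, or rewriting a \<noteq> 0 to a = 1,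
   gets in the way of the linear-algebraic reasoning below. *)
declare add_bit_eq_xor [simp del] mult_bit_eq_and [simp del]
  bit_not_zero_iff [simp del] bit_not_one_iff [simp del]

lemma bit_add_self [simp]: "(a::bit) + a = 0"
  by (cases a) (simp_all add: add_bit_eq_xor)

lemma fun_bit_add_self [simp]: "(f::'x \<Rightarrow> bit) + f = 0"
  by (simp add: fun_eq_iff)

lemma fun_bit_diff_eq_add: "(f::'x \<Rightarrow> bit) - g = f + g"
  by (simp add: fun_eq_iff)

lemma fun_bit_add_eq_0_iff: "(f::'x \<Rightarrow> bit) + g = 0 \<longleftrightarrow> f = g"
  by (metis add.assoc add_0 fun_bit_add_self)

global_interpretation F2: vector_space "fscale :: bit \<Rightarrow> ('x \<Rightarrow> bit) \<Rightarrow> ('x \<Rightarrow> bit)"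
  by unfold_locales (simp_all add: fscale_def fun_eq_iff algebra_simps)

lemma fscale_0 [simp]: "fscale 0 x = 0" and fscale_1 [simp]: "fscale 1 x = x"
  by (simp_all add: fscale_def fun_eq_iff)

definition zsubspace :: "('x \<Rightarrow> bit) set \<Rightarrow> bool" where
  "zsubspace S \<longleftrightarrow> 0 \<in> S \<and> (\<forall>x\<in>S. \<forall>y\<in>S. x + y \<in> S)"

lemma zsubspace_imp_subspace: "zsubspace S \<Longrightarrow> F2.subspace S"
  unfolding zsubspace_def F2.subspace_def
  by (metis (full_types) bit_not_one_iff fscale_0 fscale_1)

lemma span_insert_bit:
  "F2.span (insert b B) = F2.span B \<union> (\<lambda>x. x + b) ` F2.span B"
proof (rule set_eqI, rule iffI)
  fix x assume "x \<in> F2.span (insert b B)"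
  then obtain k where k: "x - fscale k b \<in> F2.span B"
    by (auto simp: F2.span_insert)
  show "x \<in> F2.span B \<union> (\<lambda>x. x + b) ` F2.span B"
  proof (cases "k = 0")
    case True
    then show ?thesis using k by simp
  next
    case False
    then have "x + b \<in> F2.span B" using k by (simp add: fun_bit_diff_eq_add bit_not_zero_iff)
    moreover have "x = (x + b) + b" by (simp add: add.assoc)
    ultimately show ?thesis by blast
  qed
next
  fix x assume "x \<in> F2.span B \<union> (\<lambda>x. x + b) ` F2.span B"
  then show "x \<in> F2.span (insert b B)"
    by (auto intro: F2.span_add F2.span_base F2.span_mono[of B "insert b B", THEN subsetD])
qed

lemma card_span_independent:
  assumes "finite B" "F2.independent (B :: ('x \<Rightarrow> bit) set)"
  shows "finite (F2.span B) \<and> card (F2.span B) = 2 ^ card B"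
  using assms
proof (induction B rule: finite_induct)
  case empty
  then show ?case by simp
next
  case (insert b B)
  have "F2.independent B" and b: "b \<notin> F2.span B"
    using insert.prems insert.hyps by (simp_all add: F2.independent_insert)
  with insert.IH have fin: "finite (F2.span B)" and card: "card (F2.span B) = 2 ^ card B"
    by auto
  have disj: "F2.span B \<inter> (\<lambda>x. x + b) ` F2.span B = {}"
  proof (rule ccontr)
    assume "F2.span B \<inter> (\<lambda>x. x + b) ` F2.span B \<noteq> {}"
    then obtain y where "y \<in> F2.span B" "y + b \<in> F2.span B" by auto
    then have "y + (y + b) \<in> F2.span B" by (rule F2.span_add)
    then show False using b by (simp add: add.assoc [symmetric])
  qed
  have "inj_on (\<lambda>x. x + b) (F2.span B)" by (auto simp: inj_on_def)
  then have "card (F2.span B \<union> (\<lambda>x. x + b) ` F2.span B) = 2 * 2 ^ card B"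
    using fin disj card by (simp add: card_Un_disjoint card_image)
  then show ?case using fin insert.hyps by (simp add: span_insert_bit)
qed

lemma card_zsubspace:
  assumes "zsubspace S" "finite S"
  shows "card S = 2 ^ zdim S"
proof -
  obtain B where B: "B \<subseteq> S" "F2.independent B" "S \<subseteq> F2.span B" "card B = F2.dim S"
    using F2.basis_exists by blast
  have "F2.span B = S"
    using F2.span_subspace[OF B(1,3) zsubspace_imp_subspace[OF assms(1)]] .
  moreover have "finite B" using B(1) assms(2) by (rule finite_subset)
  ultimately show ?thesis using card_span_independent[OF _ B(2)] B(4) by (simp add: zdim_def)
qed

lemma zdim_mono:
  assumes "zsubspace S" "finite S" "zsubspace T" "T \<subseteq> S"
  shows "zdim T \<le> zdim S"
proof -
  have "finite T" using assms(2,4) by (rule finite_subset[rotated])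
  then have "(2::nat) ^ zdim T \<le> 2 ^ zdim S"
    using card_mono[OF assms(2,4)] card_zsubspace assms by metis
  then show ?thesis by simp
qed

definition additive_on :: "('a \<Rightarrow> bit) set \<Rightarrow> (('a \<Rightarrow> bit) \<Rightarrow> ('b \<Rightarrow> bit)) \<Rightarrow> bool" where
  "additive_on S f \<longleftrightarrow> (\<forall>x\<in>S. \<forall>y\<in>S. f (x + y) = f x + f y)"

lemma additive_on_subset: "additive_on S f \<Longrightarrow> T \<subseteq> S \<Longrightarrow> additive_on T f"
  unfolding additive_on_def by blast

lemma additive_on_zero:
  assumes "zsubspace S" "additive_on S f"
  shows "f 0 = 0"
proof -
  have "f 0 = f 0 + f 0" using assms unfolding zsubspace_def additive_on_def by (metis add_0)
  then show ?thesis by simp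
qed

lemma zsubspace_image:
  assumes "zsubspace S" "additive_on S f"
  shows "zsubspace (f ` S)"
  unfolding zsubspace_def
proof (intro conjI ballI)
  show "0 \<in> f ` S"
    using additive_on_zero[OF assms] assms(1) unfolding zsubspace_def by (metis image_eqI)
  fix u v assume "u \<in> f ` S" "v \<in> f ` S"
  then obtain x y where "x \<in> S" "y \<in> S" "u = f x" "v = f y" by blast
  then show "u + v \<in> f ` S"
    using assms unfolding zsubspace_def additive_on_def by (metis image_eqI)
qed

lemma zsubspace_kernel:
  assumes "zsubspace S" "additive_on S f"
  shows "zsubspace {x\<in>S. f x = 0}"
  using assms additive_on_zero[OF assms] unfolding zsubspace_def additive_on_def by auto

lemma card_eq_card_image_mult_card_kernel:
  assumes "finite S" "zsubspace S" "additive_on S f"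
  shows "card S = card (f ` S) * card {x\<in>S. f x = 0}"
proof -
  let ?K = "{x\<in>S. f x = 0}"
  have fibre: "{x\<in>S. f x = f x0} = (\<lambda>k. k + x0) ` ?K" if "x0 \<in> S" for x0
  proof (rule set_eqI, rule iffI)
    fix x assume "x \<in> {x\<in>S. f x = f x0}"
    then have "x + x0 \<in> ?K" and "x = (x + x0) + x0"
      using that assms(2,3) by (auto simp: zsubspace_def additive_on_def add.assoc)
    then show "x \<in> (\<lambda>k. k + x0) ` ?K" by blast
  next
    fix x assume "x \<in> (\<lambda>k. k + x0) ` ?K"
    then show "x \<in> {x\<in>S. f x = f x0}"
      using that assms(2,3) by (auto simp: zsubspace_def additive_on_def)
  qed
  have card_fibre: "card {x\<in>S. f x = y} = card ?K" if "y \<in> f ` S" for y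
  proof -
    obtain x0 where "x0 \<in> S" "y = f x0" using \<open>y \<in> f ` S\<close> by blast
    moreover have "inj_on (\<lambda>k. k + x0) ?K" by (auto simp: inj_on_def)
    ultimately show ?thesis using fibre by (simp add: card_image)
  qed
  have "card S = card (\<Union>y\<in>f ` S. {x\<in>S. f x = y})"
    by (rule arg_cong[of _ _ card]) auto
  also have "\<dots> = (\<Sum>y\<in>f ` S. card {x\<in>S. f x = y})"
    using assms(1) by (intro card_UN_disjoint) auto
  also have "\<dots> = card (f ` S) * card ?K" using card_fibre by simp
  finally show ?thesis .
qed

lemma zdim_eq_zdim_image_add_zdim_kernel:
  assumes "finite S" "zsubspace S" "additive_on S f" "additive_on S g"
    and "inj_on g {x\<in>S. f x = 0}"
  shows "zdim S = zdim (f ` S) + zdim (g ` {x\<in>S. f x = 0})"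
proof -
  let ?K = "{x\<in>S. f x = 0}"
  have K: "zsubspace ?K" "finite ?K" using zsubspace_kernel assms(1-3) by auto
  have gK: "zsubspace (g ` ?K)" "finite (g ` ?K)"
    using zsubspace_image[OF K(1) additive_on_subset[OF assms(4)]] K(2) by auto
  have fS: "zsubspace (f ` S)" "finite (f ` S)"
    using zsubspace_image[OF assms(2,3)] assms(1) by auto
  have "card S = card (f ` S) * card (g ` ?K)"
    using card_eq_card_image_mult_card_kernel[OF assms(1-3)] card_image[OF assms(5)] by simp
  then have "(2::nat) ^ zdim S = 2 ^ (zdim (f ` S) + zdim (g ` ?K))"
    by (simp only: card_zsubspace[OF assms(2,1)] card_zsubspace[OF fS] card_zsubspace[OF gK]
        power_add)
  then show ?thesis by simp
qed

lemma quot_dim_split: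
  assumes "finite S" "zsubspace S" "zsubspace S'" "S' \<subseteq> S"
    and "additive_on S f" "additive_on S g" "inj_on g {x\<in>S. f x = 0}"
  shows "quot_dim S S' =
    quot_dim (f ` S) (f ` S') + quot_dim (g ` {x\<in>S. f x = 0}) (g ` {x\<in>S'. f x = 0})"
proof -
  have "finite S'" using assms(1,4) by (rule finite_subset[rotated])
  have "{x\<in>S'. f x = 0} \<subseteq> {x\<in>S. f x = 0}" using assms(4) by blast
  then have S': "additive_on S' f" "additive_on S' g" "inj_on g {x\<in>S'. f x = 0}"
    using additive_on_subset[OF assms(5,4)] additive_on_subset[OF assms(6,4)]
      inj_on_subset[OF assms(7)] by simp_all
  have "zdim (f ` S') \<le> zdim (f ` S)"
    using assms(1,4) by (intro zdim_mono zsubspace_image assms(2,3,5) S'(1)) auto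
  moreover have "zdim (g ` {x\<in>S'. f x = 0}) \<le> zdim (g ` {x\<in>S. f x = 0})"
    using assms(1,4)
    by (intro zdim_mono zsubspace_image zsubspace_kernel assms(2,3,5) S'(1)
        additive_on_subset[OF assms(6)] additive_on_subset[OF S'(2)]) auto
  ultimately show ?thesis
    using zdim_eq_zdim_image_add_zdim_kernel[OF assms(1,2,5-7)]
      zdim_eq_zdim_image_add_zdim_kernel[OF \<open>finite S'\<close> assms(3) S']
    by (simp add: quot_dim_def)
qed

lemma finite_funs_supp_subset:
  assumes "finite W"
  shows "finite {x :: 'a \<Rightarrow> bit. supp x \<subseteq> W}"
proof -
  have "{x :: 'a \<Rightarrow> bit. supp x \<subseteq> W} \<subseteq> (\<lambda>T a. if a \<in> T then 1 else 0) ` Pow W"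
  proof
    fix x :: "'a \<Rightarrow> bit" assume "x \<in> {x. supp x \<subseteq> W}"
    moreover have "x = (\<lambda>a. if a \<in> supp x then 1 else 0)"
      by (auto simp: supp_def fun_eq_iff bit_not_zero_iff bit_not_one_iff)
    ultimately show "x \<in> (\<lambda>T a. if a \<in> T then 1 else 0) ` Pow W" by blast
  qed
  then show ?thesis by (rule finite_subset) (use assms in simp)
qed

lemma supp_add_subset: "supp ((x::'a \<Rightarrow> bit) + y) \<subseteq> supp x \<union> supp y"
  by (auto simp: supp_def)

lemma wdeg_Nil [simp]: "wdeg deg [] = 0"
  and wdeg_Cons [simp]: "wdeg deg (a # v) = deg a + wdeg deg v"
  and wdeg_append [simp]: "wdeg deg (u @ v) = wdeg deg u + wdeg deg v"
  by (simp_all add: wdeg_def)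

lemma list_cases_by_length:
  obtains "w = []" | a where "w = [a]" | a b where "w = [a, b]" | "3 \<le> length w"
proof (cases w rule: remdups_adj.cases)
  case (3 a b v)
  then show thesis using that(3,4) by (cases v) auto
qed (use that in auto)

definition linear_part :: "('c list \<Rightarrow> bit) \<Rightarrow> ('c \<Rightarrow> bit)" where
  "linear_part x = (\<lambda>a. x [a])"

definition quadratic_part :: "('c list \<Rightarrow> bit) \<Rightarrow> ('c \<times> 'c \<Rightarrow> bit)" where
  "quadratic_part x = (\<lambda>(a, b). x [a, b])"

definition of_parts :: "('c \<Rightarrow> bit) \<Rightarrow> ('c \<times> 'c \<Rightarrow> bit) \<Rightarrow> ('c list \<Rightarrow> bit)" where
  "of_parts z y =
    (\<lambda>w. if length w = 1 then z (hd w) else if length w = 2 then y (w ! 0, w ! 1) else 0)"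

definition short_support :: "('c list \<Rightarrow> bit) \<Rightarrow> bool" where
  "short_support x \<longleftrightarrow> (\<forall>v. x v \<noteq> 0 \<longrightarrow> length v = 1 \<or> length v = 2)"

lemma linear_part_of_parts [simp]: "linear_part (of_parts z y) = z"
  by (simp add: linear_part_def of_parts_def)

lemma quadratic_part_of_parts [simp]: "quadratic_part (of_parts z y) = y"
  by (simp add: quadratic_part_def of_parts_def fun_eq_iff)

lemma linear_part_0 [simp]: "linear_part 0 = 0"
  and quadratic_part_0 [simp]: "quadratic_part 0 = 0"
  by (simp_all add: linear_part_def quadratic_part_def fun_eq_iff)

lemma additive_on_linear_part: "additive_on S linear_part"
  and additive_on_quadratic_part: "additive_on S quadratic_part"
  by (simp_all add: additive_on_def linear_part_def quadratic_part_def fun_eq_iff)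

lemma short_support_0 [simp]: "short_support 0"
  by (simp add: short_support_def)

lemma short_support_eqI:
  assumes "short_support x" "short_support y"
    and "linear_part x = linear_part y" "quadratic_part x = quadratic_part y"
  shows "x = y"
proof
  fix v
  show "x v = y v"
  proof (cases "x v = 0 \<and> y v = 0")
    case False
    then have "length v = 1 \<or> length v = 2"
      using assms(1,2) unfolding short_support_def by blast
    then show ?thesis
    proof (cases v rule: list_cases_by_length)
      case (2 a)
      then show ?thesis using fun_cong[OF assms(3), of a] by (simp add: linear_part_def)
    next
      case (3 a b)
      then show ?thesis using fun_cong[OF assms(4), of "(a, b)"] by (simp add: quadratic_part_def)
    qed auto
  qed simp
qed

lemma CE_word_Nil [simp]: "CE_word n [] v = 0"
  by (simp add: CE_word_def)

lemma CE_word_singleton [simp]: "CE_word n [a] v = n a v"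
  by (simp add: CE_word_def)

lemma CE_word_pair:
  "CE_word n [a, b] [c, d] = (if b = d then n a [c] else 0) + (if a = c then n b [d] else 0)"
proof -
  have "{u. u @ [b] = [c, d]} = (if b = d then {[c]} else {})"
    by (auto simp: append_eq_Cons_conv)
  moreover have "{u. a # u = [c, d]} = (if a = c then {[d]} else {})"
    by auto
  ultimately show ?thesis by (simp add: CE_word_def numeral_2_eq_2 lessThan_Suc)
qed

lemma CE_word_nonzeroE:
  assumes "CE_word n w v \<noteq> 0"
  obtains i u where "i < length w" "v = take i w @ u @ drop (Suc i) w" "n (w ! i) u \<noteq> 0"
proof -
  obtain i where i: "i \<in> {..<length w}"
    and sum: "(\<Sum>u\<in>{u. take i w @ u @ drop (Suc i) w = v}. n (w ! i) u) \<noteq> 0"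
    using assms unfolding CE_word_def by (rule sum.not_neutral_contains_not_neutral)
  from sum obtain u where "u \<in> {u. take i w @ u @ drop (Suc i) w = v}" "n (w ! i) u \<noteq> 0"
    by (rule sum.not_neutral_contains_not_neutral)
  with i show ?thesis by (intro that) auto
qed

lemma CE_diff_nonzeroE:
  assumes "CE_diff n x v \<noteq> 0"
  obtains w where "w \<in> supp x" "CE_word n w v \<noteq> 0"
proof -
  obtain w where "w \<in> supp x" "x w * CE_word n w v \<noteq> 0"
    using assms unfolding CE_diff_def by (rule sum.not_neutral_contains_not_neutral)
  then show ?thesis by (intro that) auto
qed

lemma CE_diff_eq_sum:
  assumes "finite (supp x)" "finite W" "\<And>w. w \<in> supp x \<Longrightarrow> w \<notin> W \<Longrightarrow> CE_word n w v = 0"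
  shows "CE_diff n x v = (\<Sum>w\<in>W. x w * CE_word n w v)"
proof -
  have "CE_diff n x v = (\<Sum>w\<in>supp x \<union> W. x w * CE_word n w v)"
    unfolding CE_diff_def using assms(1,2) by (intro sum.mono_neutral_left) (auto simp: supp_def)
  also have "\<dots> = (\<Sum>w\<in>W. x w * CE_word n w v)"
    using assms by (intro sum.mono_neutral_right) auto
  finally show ?thesis .
qed

lemma sum_pairs_CE_word_pair:
  assumes "finite C" "\<And>a b. y (a, b) \<noteq> 0 \<Longrightarrow> a \<in> C \<and> b \<in> C"
  shows "(\<Sum>(a, b)\<in>C \<times> C. y (a, b) * CE_word n [a, b] [c, d]) = dL2 C n y (c, d)"
proof -
  have outside: "y (a, b) = 0" if "a \<notin> C \<or> b \<notin> C" for a b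
    using assms(2) that by blast
  have first_factor: "(\<Sum>b\<in>C. y (a, b) * (if b = d then n a [c] else 0)) = y (a, d) * n a [c]" for a
    using assms(1) outside by (cases "d \<in> C") (simp_all add: if_distrib sum.delta cong: if_cong)
  have "(\<Sum>b\<in>C. y (a, b) * (if a = c then n b [d] else 0))
      = (if a = c then \<Sum>b\<in>C. y (c, b) * n b [d] else 0)" for a
    by simp
  then have second_factor: "(\<Sum>a\<in>C. \<Sum>b\<in>C. y (a, b) * (if a = c then n b [d] else 0))
      = (\<Sum>b\<in>C. y (c, b) * n b [d])"
    using assms(1) outside by (cases "c \<in> C") (simp_all add: sum.delta)
  have "(\<Sum>(a, b)\<in>C \<times> C. y (a, b) * CE_word n [a, b] [c, d])
      = (\<Sum>a\<in>C. \<Sum>b\<in>C. y (a, b) * (if b = d then n a [c] else 0))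
        + (\<Sum>a\<in>C. \<Sum>b\<in>C. y (a, b) * (if a = c then n b [d] else 0))"
    by (simp only: sum.cartesian_product [symmetric] CE_word_pair distrib_left sum.distrib)
  also have "\<dots> = dL2 C n y (c, d)"
    by (simp only: first_factor second_factor dL2_def sum.distrib case_prod_conv)
  finally show ?thesis .
qed

lemma dL_0 [simp]: "dL C n 0 = 0"
  and deltaL_0 [simp]: "deltaL C n 0 = 0"
  by (simp_all add: dL_def deltaL_def fun_eq_iff)

lemma zero_in_CL [simp]: "0 \<in> CL C deg q"
  and zero_in_CL2 [simp]: "0 \<in> CL2 C deg q"
  by (simp_all add: CL_def CL2_def)

definition CE_cycles
    :: "'c set \<Rightarrow> ('c \<Rightarrow> int) \<Rightarrow> ('c \<Rightarrow> 'c list \<Rightarrow> bit) \<Rightarrow> int \<Rightarrow> ('c list \<Rightarrow> bit) set" where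
  "CE_cycles C deg n p = {x \<in> CE_alg C deg p. CE_diff n x = 0}"

definition CE_boundaries
    :: "'c set \<Rightarrow> ('c \<Rightarrow> int) \<Rightarrow> ('c \<Rightarrow> 'c list \<Rightarrow> bit) \<Rightarrow> int \<Rightarrow> ('c list \<Rightarrow> bit) set" where
  "CE_boundaries C deg n p = CE_diff n ` CE_alg C deg (p + 1)"

locale CE_dga =
  fixes C :: "'c set" and deg :: "'c \<Rightarrow> int" and n :: "'c \<Rightarrow> 'c list \<Rightarrow> bit" and e :: int
  assumes finite_chords: "finite C"
    and moduli_deg: "\<And>a bs. n a bs \<noteq> 0 \<Longrightarrow> a \<in> C \<and> set bs \<subseteq> C \<and> wdeg deg bs = deg a - 1"
    and CE_diff_squared: "\<And>x. finite (supp x) \<Longrightarrow> (\<forall>w\<in>supp x. set w \<subseteq> C) \<Longrightarrow>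
      CE_diff n (CE_diff n x) = 0"
    and two_le_e: "e \<ge> 2"
    and deg_ge_e: "\<And>a. a \<in> C \<Longrightarrow> deg a \<ge> e"
begin

lemma wdeg_ge_length: "set v \<subseteq> C \<Longrightarrow> e * int (length v) \<le> wdeg deg v"
proof (induction v)
  case (Cons a v)
  have "e * int (length (a # v)) = e + e * int (length v)" by (simp add: distrib_left)
  then show ?case using Cons deg_ge_e[of a] by simp
qed simp

lemma moduli_Nil [simp]: "n a [] = 0"
  using moduli_deg[of a "[]"] deg_ge_e[of a] two_le_e by force

definition words :: "int \<Rightarrow> 'c list set" where
  "words q = {v. set v \<subseteq> C \<and> wdeg deg v = q}"

lemma finite_words: "finite (words q)"
proof -
  have "words q \<subseteq> {v. set v \<subseteq> C \<and> length v \<le> nat q}"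
  proof
    fix v assume v: "v \<in> words q"
    then have "set v \<subseteq> C" "wdeg deg v = q" by (auto simp: words_def)
    moreover have "1 * int (length v) \<le> e * int (length v)"
      using two_le_e by (intro mult_right_mono) auto
    ultimately show "v \<in> {v. set v \<subseteq> C \<and> length v \<le> nat q}"
      using wdeg_ge_length[of v] by auto
  qed
  then show ?thesis using finite_lists_length_le[OF finite_chords] by (rule finite_subset)
qed

lemma CE_alg_eq: "CE_alg C deg q = {x. supp x \<subseteq> words q}"
  unfolding CE_alg_def words_def using finite_subset[OF _ finite_words[unfolded words_def]] by blast

lemma CE_algD:
  assumes "x \<in> CE_alg C deg q"
  shows "finite (supp x)" "\<And>w. w \<in> supp x \<Longrightarrow> set w \<subseteq> C \<and> wdeg deg w = q"
  using assms unfolding CE_alg_def by auto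

lemma finite_CE_alg: "finite (CE_alg C deg q)"
  unfolding CE_alg_eq using finite_funs_supp_subset[OF finite_words] .

lemma zsubspace_CE_alg: "zsubspace (CE_alg C deg q)"
  unfolding CE_alg_eq zsubspace_def
proof (intro conjI ballI)
  fix x y :: "'c list \<Rightarrow> bit"
  assume "x \<in> {x. supp x \<subseteq> words q}" "y \<in> {x. supp x \<subseteq> words q}"
  then show "x + y \<in> {x. supp x \<subseteq> words q}" using supp_add_subset[of x y] by blast
qed (simp add: supp_def)

lemma CE_word_nonzeroD:
  assumes "set w \<subseteq> C" "CE_word n w v \<noteq> 0"
  shows "set v \<subseteq> C \<and> wdeg deg v = wdeg deg w - 1 \<and> length w \<le> length v"
proof -
  obtain i u where i: "i < length w" and v: "v = take i w @ u @ drop (Suc i) w"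
    and u: "n (w ! i) u \<noteq> 0"
    using assms(2) by (rule CE_word_nonzeroE)
  have u_props: "set u \<subseteq> C" "wdeg deg u = deg (w ! i) - 1" "u \<noteq> []"
    using moduli_deg[OF u] u by auto
  have "w = take i w @ w ! i # drop (Suc i) w" using id_take_nth_drop[OF i] .
  then have "wdeg deg w = wdeg deg (take i w) + deg (w ! i) + wdeg deg (drop (Suc i) w)"
    by (metis add.assoc wdeg_Cons wdeg_append)
  then have "wdeg deg v = wdeg deg w - 1" using u_props(2) v by simp
  moreover have "set v \<subseteq> C"
    using assms(1) u_props(1) v set_take_subset[of i w] set_drop_subset[of "Suc i" w] by auto
  moreover have "length w \<le> length v" using i u_props(3) v by (cases u) auto
  ultimately show ?thesis by blast
qed

lemma CE_word_eq_0_if_longer: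
  assumes "set w \<subseteq> C" "length v < length w"
  shows "CE_word n w v = 0"
  using CE_word_nonzeroD[OF assms(1)] assms(2) by fastforce

lemma CE_diff_in_CE_alg: "x \<in> CE_alg C deg (q + 1) \<Longrightarrow> CE_diff n x \<in> CE_alg C deg q"
  unfolding CE_alg_eq
proof safe
  fix v assume x: "supp x \<subseteq> words (q + 1)" and "v \<in> supp (CE_diff n x)"
  then obtain w where "w \<in> supp x" "CE_word n w v \<noteq> 0"
    by (auto simp: supp_def elim: CE_diff_nonzeroE)
  with x show "v \<in> words q" using CE_word_nonzeroD[of w v] by (auto simp: words_def)
qed

lemma additive_on_CE_diff: "additive_on (CE_alg C deg q) (CE_diff n)"
  unfolding additive_on_def
proof (intro ballI)
  fix x y assume "x \<in> CE_alg C deg q" "y \<in> CE_alg C deg q"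
  then have "supp x \<subseteq> words q" "supp y \<subseteq> words q" "supp (x + y) \<subseteq> words q"
    using supp_add_subset[of x y] by (auto simp: CE_alg_eq)
  moreover have "CE_diff n z v = (\<Sum>w\<in>words q. z w * CE_word n w v)"
    if "supp z \<subseteq> words q" for z v
    using that finite_words by (intro CE_diff_eq_sum) (auto intro: finite_subset)
  ultimately have "CE_diff n z v = (\<Sum>w\<in>words q. z w * CE_word n w v)"
    if "z \<in> {x, y, x + y}" for z v
    using that by blast
  then show "CE_diff n (x + y) = CE_diff n x + CE_diff n y"
    by (simp add: fun_eq_iff sum.distrib [symmetric] distrib_right)
qed

lemma CE_diff_CE_diff: "x \<in> CE_alg C deg q \<Longrightarrow> CE_diff n (CE_diff n x) = 0"
  using CE_diff_squared CE_algD by blast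

lemma short_support_CE_alg:
  assumes "x \<in> CE_alg C deg q" "1 \<le> q" "q < 3 * e"
  shows "short_support x"
  unfolding short_support_def
proof (intro allI impI)
  fix v assume "x v \<noteq> 0"
  then have v: "set v \<subseteq> C" "wdeg deg v = q" using CE_algD(2)[OF assms(1)] by (auto simp: supp_def)
  have "e * int (length v) < e * 3" using wdeg_ge_length[OF v(1)] v(2) assms(3) by simp
  then have "length v < 3" using two_le_e by simp
  moreover have "v \<noteq> []" using v(2) assms(2) by auto
  ultimately show "length v = 1 \<or> length v = 2" by (cases v rule: list_cases_by_length) auto
qed

lemma short_support_CE_diff:
  assumes "x \<in> CE_alg C deg q" "1 \<le> q" "q < 3 * e"
  shows "short_support (CE_diff n x)"
  unfolding short_support_def
proof (intro allI impI)
  fix v assume "CE_diff n x v \<noteq> 0"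
  then obtain w where w: "w \<in> supp x" "CE_word n w v \<noteq> 0" by (rule CE_diff_nonzeroE)
  have "length w = 1 \<or> length w = 2"
    using short_support_CE_alg[OF assms] w(1) by (simp add: short_support_def supp_def)
  moreover have v: "set v \<subseteq> C" "wdeg deg v = q - 1" "length w \<le> length v"
    using CE_word_nonzeroD[OF _ w(2)] CE_algD(2)[OF assms(1) w(1)] by auto
  moreover have "e * int (length v) < e * 3" using wdeg_ge_length[OF v(1)] v(2) assms(3) by simp
  then have "length v < 3" using two_le_e by simp
  ultimately show "length v = 1 \<or> length v = 2" by linarith
qed

lemma linear_part_in_CL: "x \<in> CE_alg C deg q \<Longrightarrow> linear_part x \<in> CL C deg q"
  unfolding CE_alg_eq CL_def linear_part_def supp_def words_def by auto

lemma quadratic_part_in_CL2: "x \<in> CE_alg C deg q \<Longrightarrow> quadratic_part x \<in> CL2 C deg q"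
  unfolding CE_alg_eq CL2_def quadratic_part_def supp_def words_def by auto

lemma of_parts_in_CE_alg:
  assumes "z \<in> CL C deg q" "y \<in> CL2 C deg q"
  shows "of_parts z y \<in> CE_alg C deg q"
  unfolding CE_alg_eq
proof (intro CollectI subsetI)
  fix w assume "w \<in> supp (of_parts z y)"
  then have "of_parts z y w \<noteq> 0" by (simp add: supp_def)
  then show "w \<in> words q"
    using assms by (cases w rule: list_cases_by_length) (auto simp: of_parts_def CL_def CL2_def words_def)
qed

lemma linear_part_CE_diff:
  assumes "x \<in> CE_alg C deg q"
  shows "linear_part (CE_diff n x) = dL C n (linear_part x)"
proof
  fix b
  have "CE_diff n x [b] = (\<Sum>w\<in>(\<lambda>a. [a]) ` C. x w * CE_word n w [b])"
  proof (rule CE_diff_eq_sum)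
    show "finite (supp x)" "finite ((\<lambda>a. [a]) ` C)"
      using CE_algD(1)[OF assms] finite_chords by auto
    fix w assume "w \<in> supp x" "w \<notin> (\<lambda>a. [a]) ` C"
    moreover from \<open>w \<in> supp x\<close> have "set w \<subseteq> C" using CE_algD(2)[OF assms] by blast
    ultimately show "CE_word n w [b] = 0"
      by (cases w rule: list_cases_by_length) (auto intro: CE_word_eq_0_if_longer)
  qed
  also have "\<dots> = (\<Sum>a\<in>C. x [a] * n a [b])" by (subst sum.reindex) (auto simp: inj_on_def)
  finally show "linear_part (CE_diff n x) b = dL C n (linear_part x) b"
    by (simp add: linear_part_def dL_def)
qed

lemma quadratic_part_CE_diff:
  assumes "x \<in> CE_alg C deg q"
  shows "quadratic_part (CE_diff n x) = deltaL C n (linear_part x) + dL2 C n (quadratic_part x)"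
proof (rule ext, clarify)
  fix c d
  let ?W1 = "(\<lambda>a. [a]) ` C" and ?W2 = "(\<lambda>(a, b). [a, b]) ` (C \<times> C)"
  have "CE_diff n x [c, d] = (\<Sum>w\<in>?W1 \<union> ?W2. x w * CE_word n w [c, d])"
  proof (rule CE_diff_eq_sum)
    show "finite (supp x)" "finite (?W1 \<union> ?W2)"
      using CE_algD(1)[OF assms] finite_chords by auto
    fix w assume "w \<in> supp x" "w \<notin> ?W1 \<union> ?W2"
    moreover from \<open>w \<in> supp x\<close> have "set w \<subseteq> C" using CE_algD(2)[OF assms] by blast
    ultimately show "CE_word n w [c, d] = 0"
      by (cases w rule: list_cases_by_length) (auto intro: CE_word_eq_0_if_longer)
  qed
  also have "\<dots> = (\<Sum>w\<in>?W1. x w * CE_word n w [c, d]) + (\<Sum>w\<in>?W2. x w * CE_word n w [c, d])"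
    using finite_chords by (intro sum.union_disjoint) auto
  also have "(\<Sum>w\<in>?W1. x w * CE_word n w [c, d]) = deltaL C n (linear_part x) (c, d)"
    by (subst sum.reindex) (auto simp: inj_on_def deltaL_def linear_part_def)
  also have "(\<Sum>w\<in>?W2. x w * CE_word n w [c, d])
      = (\<Sum>(a, b)\<in>C \<times> C. quadratic_part x (a, b) * CE_word n [a, b] [c, d])"
    by (subst sum.reindex) (auto simp: inj_on_def quadratic_part_def case_prod_beta)
  also have "\<dots> = dL2 C n (quadratic_part x) (c, d)"
    using finite_chords quadratic_part_in_CL2[OF assms] by (intro sum_pairs_CE_word_pair) (auto simp: CL2_def)
  finally show "quadratic_part (CE_diff n x) (c, d)
      = (deltaL C n (linear_part x) + dL2 C n (quadratic_part x)) (c, d)"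
    by (simp add: quadratic_part_def)
qed

lemma zsubspace_CE_cycles: "zsubspace (CE_cycles C deg n q)"
  unfolding CE_cycles_def by (rule zsubspace_kernel[OF zsubspace_CE_alg additive_on_CE_diff])

lemma zsubspace_CE_boundaries: "zsubspace (CE_boundaries C deg n q)"
  unfolding CE_boundaries_def by (rule zsubspace_image[OF zsubspace_CE_alg additive_on_CE_diff])

lemma finite_CE_cycles: "finite (CE_cycles C deg n q)"
  unfolding CE_cycles_def using finite_CE_alg by simp

lemma CE_boundaries_subset_cycles: "CE_boundaries C deg n q \<subseteq> CE_cycles C deg n q"
  unfolding CE_boundaries_def CE_cycles_def using CE_diff_in_CE_alg CE_diff_CE_diff by blast

lemma linear_part_CE_cycles:
  assumes "1 \<le> p" "p < 3 * e"
  shows "linear_part ` CE_cycles C deg n p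
    = {z \<in> ZL C deg n p. deltaL C n z \<in> BL2 C deg n (p - 1)}"
proof (rule set_eqI, rule iffI)
  fix z assume "z \<in> linear_part ` CE_cycles C deg n p"
  then obtain x where x: "x \<in> CE_alg C deg p" "CE_diff n x = 0" "z = linear_part x"
    by (auto simp: CE_cycles_def)
  have "dL C n z = 0" using linear_part_CE_diff[OF x(1)] x by simp
  moreover have "deltaL C n z = dL2 C n (quadratic_part x)"
    using quadratic_part_CE_diff[OF x(1)] x by (simp add: fun_bit_add_eq_0_iff)
  ultimately show "z \<in> {z \<in> ZL C deg n p. deltaL C n z \<in> BL2 C deg n (p - 1)}"
    using linear_part_in_CL[OF x(1)] quadratic_part_in_CL2[OF x(1)] x(3)
    by (auto simp: ZL_def BL2_def)
next
  fix z assume "z \<in> {z \<in> ZL C deg n p. deltaL C n z \<in> BL2 C deg n (p - 1)}"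
  then obtain y where z: "z \<in> CL C deg p" "dL C n z = 0"
    and y: "y \<in> CL2 C deg p" "deltaL C n z = dL2 C n y"
    by (auto simp: ZL_def BL2_def)
  have x: "of_parts z y \<in> CE_alg C deg p" using of_parts_in_CE_alg z(1) y(1) .
  have "CE_diff n (of_parts z y) = 0"
    by (rule short_support_eqI[OF short_support_CE_diff[OF x assms] short_support_0])
      (simp_all add: linear_part_CE_diff[OF x] quadratic_part_CE_diff[OF x] z y)
  with x have "of_parts z y \<in> CE_cycles C deg n p" by (simp add: CE_cycles_def)
  then show "z \<in> linear_part ` CE_cycles C deg n p" by (rule image_eqI[rotated]) simp
qed

lemma quadratic_part_CE_cycles:
  assumes "1 \<le> p" "p < 3 * e"
  shows "quadratic_part ` {x \<in> CE_cycles C deg n p. linear_part x = 0} = ZL2 C deg n p"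
proof (rule set_eqI, rule iffI)
  fix y assume "y \<in> quadratic_part ` {x \<in> CE_cycles C deg n p. linear_part x = 0}"
  then obtain x where x: "x \<in> CE_alg C deg p" "CE_diff n x = 0" "linear_part x = 0"
    and y: "y = quadratic_part x"
    by (auto simp: CE_cycles_def)
  have "dL2 C n y = 0" using quadratic_part_CE_diff[OF x(1)] x(2,3) y by simp
  then show "y \<in> ZL2 C deg n p" using quadratic_part_in_CL2[OF x(1)] y by (simp add: ZL2_def)
next
  fix y assume "y \<in> ZL2 C deg n p"
  then have y: "y \<in> CL2 C deg p" "dL2 C n y = 0" by (auto simp: ZL2_def)
  have x: "of_parts 0 y \<in> CE_alg C deg p" using of_parts_in_CE_alg zero_in_CL y(1) .
  have "CE_diff n (of_parts 0 y) = 0"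
    by (rule short_support_eqI[OF short_support_CE_diff[OF x assms] short_support_0])
      (simp_all add: linear_part_CE_diff[OF x] quadratic_part_CE_diff[OF x] y(2))
  with x have "of_parts 0 y \<in> {x \<in> CE_cycles C deg n p. linear_part x = 0}"
    by (simp add: CE_cycles_def)
  then show "y \<in> quadratic_part ` {x \<in> CE_cycles C deg n p. linear_part x = 0}"
    by (rule image_eqI[rotated]) simp
qed

lemma inj_on_quadratic_part_CE_cycles:
  assumes "1 \<le> p" "p < 3 * e"
  shows "inj_on quadratic_part {x \<in> CE_cycles C deg n p. linear_part x = 0}"
  unfolding inj_on_def CE_cycles_def
proof clarsimp
  fix x y assume "x \<in> CE_alg C deg p" "y \<in> CE_alg C deg p"
    and "linear_part x = 0" "linear_part y = 0" "quadratic_part x = quadratic_part y"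
  then show "x = y" using assms by (intro short_support_eqI short_support_CE_alg) simp_all
qed

lemma linear_part_CE_boundaries: "linear_part ` CE_boundaries C deg n p = BL C deg n p"
proof (rule set_eqI, rule iffI)
  fix z assume "z \<in> linear_part ` CE_boundaries C deg n p"
  then obtain w where w: "w \<in> CE_alg C deg (p + 1)" "z = linear_part (CE_diff n w)"
    by (auto simp: CE_boundaries_def)
  then show "z \<in> BL C deg n p"
    using linear_part_CE_diff[OF w(1)] linear_part_in_CL[OF w(1)] by (simp add: BL_def)
next
  fix z assume "z \<in> BL C deg n p"
  then obtain z' where z': "z' \<in> CL C deg (p + 1)" "z = dL C n z'" by (auto simp: BL_def)
  have w: "of_parts z' 0 \<in> CE_alg C deg (p + 1)" using of_parts_in_CE_alg z'(1) zero_in_CL2 .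
  then have "linear_part (CE_diff n (of_parts z' 0)) = z" using linear_part_CE_diff[OF w] z'(2) by simp
  then show "z \<in> linear_part ` CE_boundaries C deg n p"
    using w by (auto simp: CE_boundaries_def)
qed

lemma quadratic_part_CE_boundaries:
  "quadratic_part ` {x \<in> CE_boundaries C deg n p. linear_part x = 0}
    = {u + v |u v. u \<in> BL2 C deg n p \<and> v \<in> deltaL C n ` ZL C deg n (p + 1)}"
proof (rule set_eqI, rule iffI)
  fix y assume "y \<in> quadratic_part ` {x \<in> CE_boundaries C deg n p. linear_part x = 0}"
  then obtain w where w: "w \<in> CE_alg C deg (p + 1)" "linear_part (CE_diff n w) = 0"
    and y: "y = quadratic_part (CE_diff n w)"
    by (auto simp: CE_boundaries_def)
  have "linear_part w \<in> ZL C deg n (p + 1)"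
    using linear_part_in_CL[OF w(1)] linear_part_CE_diff[OF w(1)] w(2) by (simp add: ZL_def)
  moreover have "dL2 C n (quadratic_part w) \<in> BL2 C deg n p"
    using quadratic_part_in_CL2[OF w(1)] by (simp add: BL2_def)
  moreover have "y = dL2 C n (quadratic_part w) + deltaL C n (linear_part w)"
    using quadratic_part_CE_diff[OF w(1)] y by (simp add: add.commute)
  ultimately show "y \<in> {u + v |u v. u \<in> BL2 C deg n p \<and> v \<in> deltaL C n ` ZL C deg n (p + 1)}"
    by blast
next
  fix y assume "y \<in> {u + v |u v. u \<in> BL2 C deg n p \<and> v \<in> deltaL C n ` ZL C deg n (p + 1)}"
  then obtain y' z where y': "y' \<in> CL2 C deg (p + 1)" and z: "z \<in> CL C deg (p + 1)" "dL C n z = 0"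
    and y: "y = dL2 C n y' + deltaL C n z"
    by (auto simp: BL2_def ZL_def)
  have w: "of_parts z y' \<in> CE_alg C deg (p + 1)" using of_parts_in_CE_alg z(1) y' .
  then have "CE_diff n (of_parts z y') \<in> {x \<in> CE_boundaries C deg n p. linear_part x = 0}"
    using linear_part_CE_diff[OF w] z(2) by (simp add: CE_boundaries_def)
  moreover have "y = quadratic_part (CE_diff n (of_parts z y'))"
    using quadratic_part_CE_diff[OF w] y by (simp add: add.commute)
  ultimately show "y \<in> quadratic_part ` {x \<in> CE_boundaries C deg n p. linear_part x = 0}"
    by blast
qed

end

theorem mainTheorem13:
  fixes C :: "'c set" and deg :: "'c \<Rightarrow> int" and n :: "'c \<Rightarrow> 'c list \<Rightarrow> bit"
    and e :: int and p :: int
  assumes finC: "finite C"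
    and moduli_deg: "\<And>a bs. n a bs \<noteq> 0 \<Longrightarrow> a \<in> C \<and> set bs \<subseteq> C \<and> wdeg deg bs = deg a - 1"
    and dsq: "\<And>x. finite (supp x) \<Longrightarrow> (\<forall>w\<in>supp x. set w \<subseteq> C) \<Longrightarrow> CE_diff n (CE_diff n x) = 0"
    and e2: "e \<ge> 2"
    and deg_e: "\<And>a. a \<in> C \<Longrightarrow> deg a \<ge> e"
    and p_lo: "1 \<le> p" and p_hi: "p \<le> 3 * e - 1"
  shows "LCH_dim C deg n p = ker_delta_dim C deg n p + coker_delta_dim C deg n p"
proof -
  interpret CE_dga C deg n e
    using finC moduli_deg dsq e2 deg_e by unfold_locales
  have window: "1 \<le> p" "p < 3 * e" using p_lo p_hi by auto
  let ?Z = "CE_cycles C deg n p" and ?B = "CE_boundaries C deg n p"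
  have "LCH_dim C deg n p = quot_dim ?Z ?B"
    by (simp add: LCH_dim_def CE_cycles_def CE_boundaries_def)
  also have "\<dots> = quot_dim (linear_part ` ?Z) (linear_part ` ?B)
      + quot_dim (quadratic_part ` {x \<in> ?Z. linear_part x = 0})
          (quadratic_part ` {x \<in> ?B. linear_part x = 0})"
    by (intro quot_dim_split finite_CE_cycles zsubspace_CE_cycles zsubspace_CE_boundaries
        CE_boundaries_subset_cycles additive_on_linear_part additive_on_quadratic_part
        inj_on_quadratic_part_CE_cycles window)
  also have "\<dots> = ker_delta_dim C deg n p + coker_delta_dim C deg n p"
    unfolding ker_delta_dim_def coker_delta_dim_def linear_part_CE_cycles[OF window]
      quadratic_part_CE_cycles[OF window] linear_part_CE_boundaries quadratic_part_CE_boundaries ..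
  finally show ?thesis .
qed

end
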